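(* Let $(Y_t,X_{t-\delta})$ and $(\tilde Y_0,\tilde X_{-\delta})$ be two pairs of random variables, each on $\mathcal Y\times\mathcal X$ with $\mathcal Y,\mathcal X$ finite, and let $L$ be a loss function on $\mathcal Y\times\mathcal A$. If for all $x\in\mathcal X$ $$D_{\chi^2}\big(P_{Y_t|X_{t-\delta}=x}\,\|\,P_{\tilde Y_0|\tilde X_{-\delta}=x}\big)\le\beta^2,$$ then $$H_L(Y_t;\tilde Y_0|X_{t-\delta})=H_L(Y_t|X_{t-\delta})+O(\beta).$$
   Context: $L:\mathcal Y\times\mathcal A\to\mathbb R$ is a loss function (minima attained). For a distribution $P$ on $\mathcal Y$, a Bayes action $a_P$ is a minimizer of $a\mapsto\mathbb E_{Y\sim P}[L(Y,a)]$. $H_L(Y|X=x)=\min_{a}\mathbb E_{Y\sim P_{Y|X=x}}[L(Y,a)]$ and $H_L(Y|X)=\sum_xP_X(x)H_L(Y|X=x)$. The $L$-conditional cross entropy is $H_L(Y_t;\tilde Y_0|X_{t-\delta})=\sum_{x\in\mathcal X}P_{X_{t-\delta}}(x)\,\mathbb E_{Y\sim P_{Y_t|X_{t-\delta}=x}}\big[L(Y,a_{P_{\tilde Y_0|\tilde X_{-\delta}=x}})\big]$. Neyman's $\chi^2$-divergence $D_{\chi^2}(P\|Q)=\sum_y\frac{(P(y)-Q(y))^2}{Q(y)}$ ($0^2/0=0$). Big-O is as $\beta\to0$. *)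

theory Defs
  imports "HOL-Analysis.Analysis"
begin

definition is_dist :: "('b::finite \<Rightarrow> real) \<Rightarrow> bool" where
  "is_dist p \<longleftrightarrow> (\<forall>y. 0 \<le> p y) \<and> (\<Sum>y\<in>UNIV. p y) = 1"

definition exp_loss :: "('y::finite \<Rightarrow> 'a \<Rightarrow> real) \<Rightarrow> ('y \<Rightarrow> real) \<Rightarrow> 'a \<Rightarrow> real" where
  "exp_loss L p a = (\<Sum>y\<in>UNIV. p y * L y a)"

definition is_bayes_action :: "('y::finite \<Rightarrow> 'a \<Rightarrow> real) \<Rightarrow> ('y \<Rightarrow> real) \<Rightarrow> 'a \<Rightarrow> bool" where
  "is_bayes_action L p a \<longleftrightarrow> (\<forall>a'. exp_loss L p a \<le> exp_loss L p a')"

definition minima_attained :: "('y::finite \<Rightarrow> 'a \<Rightarrow> real) \<Rightarrow> bool" where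
  "minima_attained L \<longleftrightarrow> (\<forall>p. is_dist p \<longrightarrow> (\<exists>a. is_bayes_action L p a))"

definition gen_ent :: "('y::finite \<Rightarrow> 'a \<Rightarrow> real) \<Rightarrow> ('y \<Rightarrow> real) \<Rightarrow> real" where
  "gen_ent L p = (INF a. exp_loss L p a)"

definition cond_gen_ent :: "('y::finite \<Rightarrow> 'a \<Rightarrow> real) \<Rightarrow> ('x::finite \<Rightarrow> real) \<Rightarrow> ('x \<Rightarrow> 'y \<Rightarrow> real) \<Rightarrow> real" where
  "cond_gen_ent L px pc = (\<Sum>x\<in>UNIV. px x * gen_ent L (pc x))"

text \<open>L-conditional cross entropy H_L(Y_t; Y~_0 | X_{t-delta}), where aq x is the
  (chosen) Bayes action of the conditional law of Y~_0 given X~_{-delta} = x.\<close>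
definition cond_cross_ent :: "('y::finite \<Rightarrow> 'a \<Rightarrow> real) \<Rightarrow> ('x::finite \<Rightarrow> real) \<Rightarrow> ('x \<Rightarrow> 'y \<Rightarrow> real) \<Rightarrow> ('x \<Rightarrow> 'a) \<Rightarrow> real" where
  "cond_cross_ent L px pc aq = (\<Sum>x\<in>UNIV. px x * exp_loss L (pc x) (aq x))"

text \<open>Neyman chi-square divergence, valued in ereal: infinite if P is not
  absolutely continuous w.r.t. Q (terms 0^2/0 count as 0).\<close>
definition chi2_div :: "('y::finite \<Rightarrow> real) \<Rightarrow> ('y \<Rightarrow> real) \<Rightarrow> ereal" where
  "chi2_div p q = (if \<exists>y. q y = 0 \<and> p y \<noteq> 0 then \<infinity>
     else ereal (\<Sum>y\<in>{y. q y \<noteq> 0}. (p y - q y)^2 / q y))"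

end

theory Submission
  imports Defs
begin

text \<open>Fix \<open>x\<close>; let \<open>q\<close> be the conditional law of \<open>\<tilde>Y\<^sub>0\<close> with Bayes action \<open>a\<close> and \<open>p\<close> that
  of \<open>Y\<^sub>t\<close> with Bayes action \<open>b\<close>. The \<open>\<chi>\<^sup>2\<close> bound gives \<open>\<bar>p y - q y\<bar> \<le> \<beta>\<close>, and once \<open>\<beta>\<close> is
  below half the smallest positive value \<open>\<mu>\<close> of all the \<open>q\<close>'s this upgrades to the
  multiplicative bound \<open>q \<le> (1 + 2\<beta>/\<mu>) p\<close>. Subtracting the pointwise minimal loss makes
  \<open>L\<close> nonnegative without changing regrets, and then
  \<open>E\<^sub>p L\<^sub>a \<le> E\<^sub>q L\<^sub>a + \<beta> \<Sum> L\<^sub>a \<le> E\<^sub>q L\<^sub>b + \<beta> \<Sum> L\<^sub>a \<le> (1 + 2\<beta>/\<mu>) E\<^sub>p L\<^sub>b + \<beta> \<Sum> L\<^sub>a\<close>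
  together with \<open>E\<^sub>p L\<^sub>b \<le> E\<^sub>p L\<^sub>a \<le> \<Sum> L\<^sub>a\<close> bounds the regret of \<open>a\<close> under \<open>p\<close> by
  \<open>\<beta> (1 + 2/\<mu>) \<Sum>\<^sub>y L(y,a)\<close>, uniformly in \<open>p\<close>.\<close>

lemma is_dist_nonneg: "is_dist p \<Longrightarrow> 0 \<le> p y"
  unfolding is_dist_def by simp

lemma is_dist_le_1:
  fixes p :: "'y::finite \<Rightarrow> real"
  assumes "is_dist p"
  shows "p y \<le> 1"
proof -
  have "p y \<le> (\<Sum>z\<in>UNIV. p z)"
    using assms unfolding is_dist_def by (intro member_le_sum) auto
  then show ?thesis
    using assms unfolding is_dist_def by simp
qed

lemma gen_ent_eq_exp_loss:
  assumes "is_bayes_action L p b"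
  shows "gen_ent L p = exp_loss L p b"
  using assms unfolding gen_ent_def is_bayes_action_def
  by (intro cInf_eq_minimum) auto

lemma exp_loss_shift:
  "exp_loss (\<lambda>y c. L y c - h y) p c = exp_loss L p c - (\<Sum>y\<in>UNIV. p y * h y)"
  unfolding exp_loss_def by (simp add: right_diff_distrib sum_subtractf)

lemma is_bayes_action_shift:
  "is_bayes_action (\<lambda>y c. L y c - h y) p c \<longleftrightarrow> is_bayes_action L p c"
  unfolding is_bayes_action_def exp_loss_shift by simp

lemma minima_attained_imp_pointwise_minimiser:
  fixes L :: "'y::finite \<Rightarrow> 'a \<Rightarrow> real"
  assumes "minima_attained L"
  obtains m where "\<And>y c. L y (m y) \<le> L y c"
proof -
  have "\<exists>b. \<forall>c. L y b \<le> L y c" for y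
  proof -
    define \<delta> where "\<delta> z = (if z = y then 1 else 0 :: real)" for z
    have "is_dist \<delta>"
      unfolding is_dist_def \<delta>_def by auto
    then obtain b where "is_bayes_action L \<delta> b"
      using assms unfolding minima_attained_def by blast
    moreover have "exp_loss L \<delta> c = L y c" for c
      unfolding exp_loss_def \<delta>_def by (simp add: if_distrib[of "\<lambda>t. t * _"] cong: if_cong)
    ultimately show ?thesis
      unfolding is_bayes_action_def by auto
  qed
  then show ?thesis
    using that by metis
qed

lemma finite_pos_values_bounded_away_from_0:
  fixes f :: "'a::finite \<Rightarrow> real"
  obtains \<mu> where "0 < \<mu>" and "\<And>z. 0 < f z \<Longrightarrow> \<mu> \<le> f z"
proof
  let ?S = "insert 1 (f ` {z. 0 < f z})"
  show "0 < Min ?S"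
    by (subst Min_gr_iff) auto
  show "Min ?S \<le> f z" if "0 < f z" for z
    using that by (intro Min_le) auto
qed

lemma chi2_div_le_imp_abs_diff_le:
  fixes p q :: "'y::finite \<Rightarrow> real"
  assumes chi2: "chi2_div p q \<le> ereal (\<beta>^2)" and q: "is_dist q" and "0 \<le> \<beta>"
  shows "\<bar>p y - q y\<bar> \<le> \<beta>"
proof (cases "q y = 0")
  case True
  with chi2 have "p y = 0"
    unfolding chi2_div_def by (auto split: if_splits)
  with True \<open>0 \<le> \<beta>\<close> show ?thesis by simp
next
  case False
  with is_dist_nonneg[OF q] have q_pos: "0 < q y"
    by (simp add: order_less_le)
  from chi2 False have "(\<Sum>z\<in>{z. q z \<noteq> 0}. (p z - q z)^2 / q z) \<le> \<beta>^2"
    unfolding chi2_div_def by (auto split: if_splits)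
  moreover have "(p y - q y)^2 / q y \<le> (\<Sum>z\<in>{z. q z \<noteq> 0}. (p z - q z)^2 / q z)"
    using False is_dist_nonneg[OF q] by (intro member_le_sum) auto
  ultimately have "(p y - q y)^2 / q y \<le> \<beta>^2"
    by linarith
  then have "(p y - q y)^2 \<le> \<beta>^2 * q y"
    using q_pos by (simp add: field_simps)
  also have "\<dots> \<le> \<beta>^2"
    using is_dist_le_1[OF q] by (simp add: mult_left_le)
  finally show ?thesis
    using \<open>0 \<le> \<beta>\<close> by (metis abs_le_square_iff abs_of_nonneg)
qed

lemma le_scaled_of_abs_diff_le:
  fixes p q \<beta> \<mu> :: real
  assumes "\<bar>p - q\<bar> \<le> \<beta>" and "0 \<le> p" and "q = 0 \<or> \<mu> \<le> q" and "0 < \<mu>" and "2 * \<beta> \<le> \<mu>"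
  shows "q \<le> (1 + 2 * \<beta> / \<mu>) * p"
proof -
  have "0 \<le> \<beta>"
    using assms(1) abs_ge_zero order_trans by blast
  show ?thesis
  proof (cases "q = 0")
    case True
    with assms(2,4) \<open>0 \<le> \<beta>\<close> show ?thesis
      by simp
  next
    case False
    with assms have "\<mu> \<le> 2 * p"
      by auto
    then have "\<beta> \<le> 2 * \<beta> / \<mu> * p"
      using \<open>0 < \<mu>\<close> \<open>0 \<le> \<beta>\<close> by (simp add: field_simps mult_left_mono)
    with assms show ?thesis
      by (simp add: algebra_simps)
  qed
qed

lemma exp_loss_regret_le:
  fixes L :: "'y::finite \<Rightarrow> 'a \<Rightarrow> real"
  assumes L_nonneg: "\<And>y c. 0 \<le> L y c"
    and p_nonneg: "\<And>y. 0 \<le> p y" and p_le_1: "\<And>y. p y \<le> 1"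
    and a: "is_bayes_action L q a" and b: "is_bayes_action L p b"
    and p_le: "\<And>y. p y \<le> q y + \<beta>"
    and q_le: "\<And>y. q y \<le> (1 + \<epsilon>) * p y" and "0 \<le> \<epsilon>"
  shows "exp_loss L p a - exp_loss L p b \<le> (\<beta> + \<epsilon>) * (\<Sum>y\<in>UNIV. L y a)"
proof -
  let ?S = "\<Sum>y\<in>UNIV. L y a"
  have "exp_loss L p a \<le> (\<Sum>y\<in>UNIV. (q y + \<beta>) * L y a)"
    unfolding exp_loss_def using p_le L_nonneg by (intro sum_mono mult_right_mono) auto
  also have "\<dots> = exp_loss L q a + \<beta> * ?S"
    unfolding exp_loss_def by (simp add: distrib_right sum.distrib sum_distrib_left)
  also have "\<dots> \<le> exp_loss L q b + \<beta> * ?S"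
    using a unfolding is_bayes_action_def by simp
  also have "exp_loss L q b \<le> (1 + \<epsilon>) * exp_loss L p b"
    unfolding exp_loss_def sum_distrib_left mult.assoc[symmetric]
    using q_le L_nonneg by (intro sum_mono mult_right_mono) auto
  finally have "exp_loss L p a - exp_loss L p b \<le> \<epsilon> * exp_loss L p b + \<beta> * ?S"
    by (simp add: algebra_simps)
  moreover have "exp_loss L p b \<le> ?S"
  proof -
    have "exp_loss L p b \<le> exp_loss L p a"
      using b unfolding is_bayes_action_def by simp
    also have "\<dots> \<le> ?S"
      unfolding exp_loss_def using p_nonneg p_le_1 L_nonneg
      by (intro sum_mono) (simp add: mult_left_le_one_le)
    finally show ?thesis .
  qed
  ultimately show ?thesis
    using mult_left_mono[OF _ \<open>0 \<le> \<epsilon>\<close>] by (fastforce simp: algebra_simps)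
qed

lemma exp_loss_regret_le_chi2_div:
  fixes L :: "'y::finite \<Rightarrow> 'a \<Rightarrow> real"
  assumes m: "\<And>y c. L y (m y) \<le> L y c"
    and p: "is_dist p" and q: "is_dist q"
    and a: "is_bayes_action L q a" and b: "is_bayes_action L p b"
    and chi2: "chi2_div p q \<le> ereal (\<beta>^2)" and "0 \<le> \<beta>"
    and \<mu>: "0 < \<mu>" "\<And>y. 0 < q y \<Longrightarrow> \<mu> \<le> q y" and "2 * \<beta> \<le> \<mu>"
  shows "exp_loss L p a - exp_loss L p b \<le> \<beta> * (1 + 2 / \<mu>) * (\<Sum>y\<in>UNIV. L y a - L y (m y))"
proof -
  have close: "\<bar>p y - q y\<bar> \<le> \<beta>" for y
    using chi2_div_le_imp_abs_diff_le[OF chi2 q \<open>0 \<le> \<beta>\<close>] .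
  have "q y = 0 \<or> \<mu> \<le> q y" for y
    using \<mu>(2)[of y] is_dist_nonneg[OF q, of y] by (auto simp: le_less)
  then have "q y \<le> (1 + 2 * \<beta> / \<mu>) * p y" for y
    using le_scaled_of_abs_diff_le close is_dist_nonneg[OF p] \<mu>(1) \<open>2 * \<beta> \<le> \<mu>\<close> by blast
  moreover have "p y \<le> q y + \<beta>" for y
    using close[of y] by simp
  ultimately have "exp_loss (\<lambda>y c. L y c - L y (m y)) p a - exp_loss (\<lambda>y c. L y c - L y (m y)) p b
      \<le> (\<beta> + 2 * \<beta> / \<mu>) * (\<Sum>y\<in>UNIV. L y a - L y (m y))"
    using m is_dist_nonneg[OF p] is_dist_le_1[OF p] a b \<open>0 \<le> \<beta>\<close> \<mu>(1)
    by (intro exp_loss_regret_le) (simp_all add: is_bayes_action_shift)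
  then show ?thesis
    by (simp add: exp_loss_shift algebra_simps)
qed

lemma abs_cond_cross_ent_minus_cond_gen_ent_le:
  fixes L :: "'y::finite \<Rightarrow> 'a \<Rightarrow> real"
  assumes px: "is_dist px" and b: "\<And>x. is_bayes_action L (pc x) (b x)"
    and B: "\<And>x. exp_loss L (pc x) (aq x) - exp_loss L (pc x) (b x) \<le> B x"
  shows "\<bar>cond_cross_ent L px pc aq - cond_gen_ent L px pc\<bar> \<le> (\<Sum>x\<in>UNIV. B x)"
proof -
  define G where "G x = exp_loss L (pc x) (aq x) - exp_loss L (pc x) (b x)" for x
  have G_nonneg: "0 \<le> G x" for x
    using b[of x] unfolding G_def is_bayes_action_def by simp
  have "cond_cross_ent L px pc aq - cond_gen_ent L px pc = (\<Sum>x\<in>UNIV. px x * G x)"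
    unfolding cond_cross_ent_def cond_gen_ent_def G_def gen_ent_eq_exp_loss[OF b]
    by (simp add: right_diff_distrib sum_subtractf)
  moreover have "0 \<le> (\<Sum>x\<in>UNIV. px x * G x)"
    using is_dist_nonneg[OF px] G_nonneg by (intro sum_nonneg) auto
  moreover have "px x * G x \<le> B x" for x
  proof -
    have "px x * G x \<le> G x"
      using is_dist_nonneg[OF px] is_dist_le_1[OF px] G_nonneg by (simp add: mult_left_le_one_le)
    then show ?thesis
      using B[of x] unfolding G_def by simp
  qed
  then have "(\<Sum>x\<in>UNIV. px x * G x) \<le> (\<Sum>x\<in>UNIV. B x)"
    by (rule sum_mono)
  ultimately show ?thesis
    by simp
qed

theorem lemma3p7:
  fixes L :: "'y::finite \<Rightarrow> 'a \<Rightarrow> real"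
    and qc :: "'x::finite \<Rightarrow> 'y \<Rightarrow> real"
    and aq :: "'x \<Rightarrow> 'a"
  assumes "minima_attained L"
    and "\<And>x. is_dist (qc x)"
    and "\<And>x. is_bayes_action L (qc x) (aq x)"
  shows "\<exists>C \<beta>0. \<beta>0 > 0 \<and>
    (\<forall>\<beta> px pc. 0 < \<beta> \<and> \<beta> < \<beta>0 \<and> is_dist px \<and> (\<forall>x. is_dist (pc x)) \<and>
        (\<forall>x. chi2_div (pc x) (qc x) \<le> ereal (\<beta>^2)) \<longrightarrow>
      \<bar>cond_cross_ent L px pc aq - cond_gen_ent L px pc\<bar> \<le> C * \<beta>)"
proof -
  obtain m where m: "\<And>y c. L y (m y) \<le> L y c"
    using minima_attained_imp_pointwise_minimiser[OF assms(1)] by blast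
  obtain \<mu> where \<mu>: "0 < \<mu>" "\<And>x y. 0 < qc x y \<Longrightarrow> \<mu> \<le> qc x y"
    using finite_pos_values_bounded_away_from_0[of "case_prod qc"] by auto
  define K where "K x = (\<Sum>y\<in>UNIV. L y (aq x) - L y (m y))" for x
  show ?thesis
  proof (rule exI[of _ "(1 + 2 / \<mu>) * (\<Sum>x\<in>UNIV. K x)"], rule exI[of _ "\<mu> / 2"],
      intro conjI allI impI)
    fix \<beta> :: real and px :: "'x \<Rightarrow> real" and pc :: "'x \<Rightarrow> 'y \<Rightarrow> real"
    assume H: "0 < \<beta> \<and> \<beta> < \<mu> / 2 \<and> is_dist px \<and> (\<forall>x. is_dist (pc x)) \<and>
      (\<forall>x. chi2_div (pc x) (qc x) \<le> ereal (\<beta>^2))"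
    then have "\<forall>x. \<exists>c. is_bayes_action L (pc x) c"
      using assms(1) unfolding minima_attained_def by blast
    then obtain b where b: "\<And>x. is_bayes_action L (pc x) (b x)"
      by metis
    have "exp_loss L (pc x) (aq x) - exp_loss L (pc x) (b x) \<le> \<beta> * (1 + 2 / \<mu>) * K x" for x
      unfolding K_def using H m assms(2,3) b \<mu>
      by (intro exp_loss_regret_le_chi2_div) auto
    then have "\<bar>cond_cross_ent L px pc aq - cond_gen_ent L px pc\<bar>
        \<le> (\<Sum>x\<in>UNIV. \<beta> * (1 + 2 / \<mu>) * K x)"
      using H b by (intro abs_cond_cross_ent_minus_cond_gen_ent_le) auto
    also have "\<dots> = (1 + 2 / \<mu>) * (\<Sum>x\<in>UNIV. K x) * \<beta>"
      by (simp add: sum_distrib_left sum_distrib_right mult_ac)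
    finally show "\<bar>cond_cross_ent L px pc aq - cond_gen_ent L px pc\<bar>
        \<le> (1 + 2 / \<mu>) * (\<Sum>x\<in>UNIV. K x) * \<beta>" .
  qed (use \<mu> in simp)
qed

end
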